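(* Let $G$ be a graph, $S\subseteq V(G)$, $k$ an integer, and let $\mathcal{C}$ be the set of all inclusion-wise maximal chips. Any chip $C \in \mathcal{C}$ touches at most $3k \cdot 4^{3k}$ other chips of $\mathcal{C}$.
   Context: $N(C)$ is the set of vertices outside $C$ with a neighbour in $C$. For $X,Y\subseteq V(G)$, a set $W$ is an $X-Y$ separator if no connected component of $G\setminus W$ contains both a vertex of $X$ and a vertex of $Y$. $R_H(Z)$ denotes the set of vertices reachable from $Z$ in $H$. An inclusion-wise minimal $X-Y$ separator $W$ is an important $X-Y$ separator if there is no $X-Y$ separator $W'$ with $|W'|\le|W|$ and $R_{G\setminus W}(X\setminus W)\subsetneq R_{G\setminus W'}(X\setminus W')$. For fixed $S$ and $k$, a set $C\subseteq V(G)$ is a chip if $G[C]$ is connected, $|N(C)|\le 3k$, and $N(C)$ is an important $C-S$ separator. Two distinct chips $C_1,C_2\in\mathcal{C}$ touch if $C_1\cap C_2\neq\emptyset$ or there is an edge with one endpoint in $C_1$ and the other in $C_2$. *)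

theory Defs
  imports Main
begin

definition graph :: "'a set \<Rightarrow> ('a \<Rightarrow> 'a \<Rightarrow> bool) \<Rightarrow> bool" where
  "graph V E \<longleftrightarrow> finite V \<and> (\<forall>u v. E u v \<longrightarrow> E v u) \<and> (\<forall>v. \<not> E v v)
     \<and> (\<forall>u v. E u v \<longrightarrow> u \<in> V \<and> v \<in> V)"

definition reach :: "('a \<Rightarrow> 'a \<Rightarrow> bool) \<Rightarrow> 'a set \<Rightarrow> 'a \<Rightarrow> 'a \<Rightarrow> bool" where
  "reach E A u v \<longleftrightarrow> u \<in> A \<and> (\<lambda>x y. x \<in> A \<and> y \<in> A \<and> E x y)\<^sup>*\<^sup>* u v"

definition nbh :: "'a set \<Rightarrow> ('a \<Rightarrow> 'a \<Rightarrow> bool) \<Rightarrow> 'a set \<Rightarrow> 'a set" where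
  "nbh V E C = {v \<in> V - C. \<exists>u\<in>C. E u v}"

definition connected_set :: "'a set \<Rightarrow> ('a \<Rightarrow> 'a \<Rightarrow> bool) \<Rightarrow> 'a set \<Rightarrow> bool" where
  "connected_set V E C \<longleftrightarrow> C \<subseteq> V \<and> C \<noteq> {} \<and> (\<forall>u\<in>C. \<forall>v\<in>C. reach E C u v)"

definition separator :: "'a set \<Rightarrow> ('a \<Rightarrow> 'a \<Rightarrow> bool) \<Rightarrow> 'a set \<Rightarrow> 'a set \<Rightarrow> 'a set \<Rightarrow> bool" where
  "separator V E X Y W \<longleftrightarrow> W \<subseteq> V \<and> \<not> (\<exists>x\<in>X. \<exists>y\<in>Y. reach E (V - W) x y)"

definition reachable_set :: "'a set \<Rightarrow> ('a \<Rightarrow> 'a \<Rightarrow> bool) \<Rightarrow> 'a set \<Rightarrow> 'a set \<Rightarrow> 'a set" where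
  "reachable_set V E W X = {v. \<exists>x\<in>X - W. reach E (V - W) x v}"

definition min_separator :: "'a set \<Rightarrow> ('a \<Rightarrow> 'a \<Rightarrow> bool) \<Rightarrow> 'a set \<Rightarrow> 'a set \<Rightarrow> 'a set \<Rightarrow> bool" where
  "min_separator V E X Y W \<longleftrightarrow> separator V E X Y W \<and> (\<forall>W'. W' \<subset> W \<longrightarrow> \<not> separator V E X Y W')"

definition important_separator :: "'a set \<Rightarrow> ('a \<Rightarrow> 'a \<Rightarrow> bool) \<Rightarrow> 'a set \<Rightarrow> 'a set \<Rightarrow> 'a set \<Rightarrow> bool" where
  "important_separator V E X Y W \<longleftrightarrow> min_separator V E X Y W \<and>
     \<not> (\<exists>W'. separator V E X Y W' \<and> card W' \<le> card W \<and>
            reachable_set V E W X \<subset> reachable_set V E W' X)"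

definition chip :: "'a set \<Rightarrow> ('a \<Rightarrow> 'a \<Rightarrow> bool) \<Rightarrow> 'a set \<Rightarrow> nat \<Rightarrow> 'a set \<Rightarrow> bool" where
  "chip V E S k C \<longleftrightarrow> connected_set V E C \<and> card (nbh V E C) \<le> 3 * k \<and>
     important_separator V E C S (nbh V E C)"

definition max_chip :: "'a set \<Rightarrow> ('a \<Rightarrow> 'a \<Rightarrow> bool) \<Rightarrow> 'a set \<Rightarrow> nat \<Rightarrow> 'a set \<Rightarrow> bool" where
  "max_chip V E S k C \<longleftrightarrow> chip V E S k C \<and> \<not> (\<exists>C'. chip V E S k C' \<and> C \<subset> C')"

definition touch :: "('a \<Rightarrow> 'a \<Rightarrow> bool) \<Rightarrow> 'a set \<Rightarrow> 'a set \<Rightarrow> bool" where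
  "touch E C1 C2 \<longleftrightarrow> C1 \<noteq> C2 \<and> (C1 \<inter> C2 \<noteq> {} \<or> (\<exists>u\<in>C1. \<exists>v\<in>C2. E u v))"

end

theory Submission
  imports Defs
begin

text \<open>A chip touching a maximal chip \<open>C\<close> contains a vertex \<open>v\<close> of \<open>N(C)\<close> (being connected, it
  would otherwise lie inside \<open>C\<close>), and the importance of its boundary makes it an important region
  for the source \<open>{v}\<close>, of boundary size at most \<open>3k\<close>. So it suffices to bound the important regions
  of boundary size at most \<open>p\<close> by \<open>4\<^sup>p\<close>. With \<open>\<lambda>\<close> the least boundary size, one shows
  \<open>#important \<cdot> 2\<^sup>\<lambda> \<le> 4\<^sup>p\<close> by induction on \<open>2p - \<lambda>\<close>. By submodularity of \<open>|N(R)|\<close> there is a unique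
  inclusion-maximal region \<open>R\<^sub>s\<close> of boundary size \<open>\<lambda>\<close>, and every important region contains it.
  Branch on a vertex \<open>u \<in> N(R\<^sub>s)\<close>: important regions containing \<open>u\<close> stay important for the source
  \<open>A \<union> {u}\<close>, where \<open>\<lambda>\<close> strictly grows; the others have \<open>u\<close> on their boundary and stay important once
  \<open>u\<close> is committed to the separator and the budget lowered to \<open>p - 1\<close>, where \<open>\<lambda>\<close> drops by at most one.\<close>

lemma reach_refl: "u \<in> A \<Longrightarrow> reach E A u u"
  by (simp add: reach_def)

lemma reach_trans: "reach E A u v \<Longrightarrow> reach E A v w \<Longrightarrow> reach E A u w"
  unfolding reach_def by auto

lemma reach_closed:
  assumes "reach E A u v" "u \<in> R" "\<And>a b. a \<in> R \<Longrightarrow> b \<in> A \<Longrightarrow> E a b \<Longrightarrow> b \<in> R"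
  shows "v \<in> R"
proof -
  have "(\<lambda>x y. x \<in> A \<and> y \<in> A \<and> E x y)\<^sup>*\<^sup>* u v" using assms(1) by (simp add: reach_def)
  then show ?thesis by (induction rule: rtranclp_induct) (use assms(2,3) in blast)+
qed

lemma reach_target: "reach E A u v \<Longrightarrow> v \<in> A"
  using reach_closed[of E A u v A] by (auto simp: reach_def)

lemma reach_mono: "reach E A u v \<Longrightarrow> A \<subseteq> B \<Longrightarrow> reach E B u v"
  unfolding reach_def
  by (auto elim: rtranclp_mono[THEN predicate2D, rotated])

lemma reach_step: "reach E A u v \<Longrightarrow> E v w \<Longrightarrow> w \<in> A \<Longrightarrow> reach E A u w"
  using reach_target[of E A u v] unfolding reach_def
  by (auto intro: rtranclp.rtrancl_into_rtrancl)

lemma reach_outside_nbh: "reach E (V - nbh V E R) x y \<Longrightarrow> x \<in> R \<Longrightarrow> y \<in> R"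
  by (erule reach_closed) (auto simp: nbh_def)

lemma nbh_subset: "nbh V E R \<subseteq> V"
  by (auto simp: nbh_def)

lemma connected_subset_if_disjoint_nbh:
  assumes "connected_set V E C'" "x \<in> C \<inter> C'" "C' \<inter> nbh V E C = {}"
  shows "C' \<subseteq> C"
proof
  fix y assume "y \<in> C'"
  with assms(1,2) have "reach E C' x y" by (auto simp: connected_set_def)
  then show "y \<in> C"
    by (rule reach_closed) (use assms in \<open>auto simp: nbh_def connected_set_def\<close>)
qed

lemma touching_max_chip_meets_nbh:
  assumes C: "max_chip V E S k C" and C': "max_chip V E S k C'" and "touch E C C'"
  shows "C' \<inter> nbh V E C \<noteq> {}"
proof
  assume disj: "C' \<inter> nbh V E C = {}"
  have conn: "connected_set V E C'" using C' by (simp add: max_chip_def chip_def)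
  show False
  proof (cases "C \<inter> C' = {}")
    case True
    then show False
      using \<open>touch E C C'\<close> disj conn by (auto simp: touch_def nbh_def connected_set_def)
  next
    case False
    then have "C' \<subseteq> C" using connected_subset_if_disjoint_nbh[OF conn _ disj] by blast
    then show False using C C' \<open>touch E C C'\<close> by (auto simp: max_chip_def touch_def)
  qed
qed

definition reachable_part :: "('a \<Rightarrow> 'a \<Rightarrow> bool) \<Rightarrow> 'a set \<Rightarrow> 'a set \<Rightarrow> 'a set" where
  "reachable_part E R A = {x. \<exists>a\<in>A. reach E R a x}"

lemma reachable_part_subset: "reachable_part E R A \<subseteq> R"
  by (auto simp: reachable_part_def dest: reach_target)

lemma subset_reachable_part: "A \<subseteq> R \<Longrightarrow> A \<subseteq> reachable_part E R A"
  by (auto simp: reachable_part_def intro: reach_refl)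

lemma reachable_part_mono:
  "R \<subseteq> R' \<Longrightarrow> A \<subseteq> A' \<Longrightarrow> reachable_part E R A \<subseteq> reachable_part E R' A'"
  unfolding reachable_part_def by (blast intro: reach_mono)

lemma reach_in_reachable_part:
  assumes "reach E R a x" "a \<in> A"
  shows "reach E (reachable_part E R A) a x"
proof -
  have "a \<in> R" using assms(1) by (simp add: reach_def)
  have "(\<lambda>x y. x \<in> R \<and> y \<in> R \<and> E x y)\<^sup>*\<^sup>* a x" using assms(1) by (simp add: reach_def)
  then show ?thesis
  proof (induction rule: rtranclp_induct)
    case base
    show ?case using assms(2) \<open>a \<in> R\<close> by (auto simp: reachable_part_def intro: reach_refl)
  next
    case (step y z)
    have "reach E R a y" using \<open>a \<in> R\<close> step(1) by (simp add: reach_def)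
    then have "z \<in> reachable_part E R A"
      using step(2) assms(2) by (auto simp: reachable_part_def intro: reach_step)
    then show ?case using step(2,3) by (blast intro: reach_step)
  qed
qed

lemma nbh_reachable_part_subset: "nbh V E (reachable_part E R A) \<subseteq> nbh V E R"
proof
  fix w assume w: "w \<in> nbh V E (reachable_part E R A)"
  then obtain a x where "a \<in> A" "reach E R a x" "E x w"
    by (auto simp: nbh_def reachable_part_def)
  moreover have "w \<notin> reachable_part E R A" using w by (simp add: nbh_def)
  ultimately have "w \<notin> R" by (auto simp: reachable_part_def intro: reach_step)
  then show "w \<in> nbh V E R"
    using w reachable_part_subset by (fastforce simp: nbh_def)
qed

text \<open>\<open>R\<close> is the source side of an \<open>A\<close>-\<open>S\<close> separator \<open>N(R)\<close>. The vertices of \<open>D\<close> are already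
  committed to the separator: they may not enter \<open>R\<close> and no longer count towards its cost.\<close>

locale separation_graph =
  fixes V :: "'a set" and E :: "'a \<Rightarrow> 'a \<Rightarrow> bool" and S :: "'a set"
  assumes finite_V: "finite V"
begin

definition region :: "'a set \<Rightarrow> 'a set \<Rightarrow> 'a set \<Rightarrow> bool" where
  "region D A R \<longleftrightarrow> A \<subseteq> R \<and> R \<subseteq> V \<and> R \<inter> (S \<union> D) = {} \<and> R \<subseteq> reachable_part E R A"

definition cost :: "'a set \<Rightarrow> 'a set \<Rightarrow> nat" where
  "cost D R = card (nbh V E R - D)"

definition important_region :: "'a set \<Rightarrow> 'a set \<Rightarrow> nat \<Rightarrow> 'a set \<Rightarrow> bool" where
  "important_region D A p R \<longleftrightarrow> region D A R \<and> cost D R \<le> p \<and>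
     (\<forall>R'. region D A R' \<and> R \<subset> R' \<longrightarrow> cost D R < cost D R')"

definition least_cost_region :: "'a set \<Rightarrow> 'a set \<Rightarrow> 'a set \<Rightarrow> bool" where
  "least_cost_region D A R \<longleftrightarrow> region D A R \<and> (\<forall>R'. region D A R' \<longrightarrow> cost D R \<le> cost D R')"

definition max_least_cost_region :: "'a set \<Rightarrow> 'a set \<Rightarrow> 'a set \<Rightarrow> bool" where
  "max_least_cost_region D A R \<longleftrightarrow> least_cost_region D A R \<and>
     (\<forall>R'. least_cost_region D A R' \<longrightarrow> R' \<subseteq> R)"

lemma finite_nbh: "finite (nbh V E R)"
  using finite_subset[OF nbh_subset finite_V] .

lemma finite_nbh_diff: "finite (nbh V E R - D)"
  using finite_nbh by blast

lemma finite_important_regions: "finite {R. important_region D A p R}"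
  by (rule finite_subset[of _ "Pow V"]) (auto simp: important_region_def region_def finite_V)

lemma cost_submodular: "cost D (R1 \<union> R2) + cost D (R1 \<inter> R2) \<le> cost D R1 + cost D R2"
proof -
  let ?N = "\<lambda>R. nbh V E R - D"
  have fin: "finite (?N R1 \<union> ?N R2)" "finite (?N R1 \<inter> ?N R2)"
    by (simp_all add: finite_nbh_diff)
  have "cost D (R1 \<union> R2) + cost D (R1 \<inter> R2)
      = card (?N (R1 \<union> R2) \<union> ?N (R1 \<inter> R2)) + card (?N (R1 \<union> R2) \<inter> ?N (R1 \<inter> R2))"
    unfolding cost_def by (rule card_Un_Int[OF finite_nbh_diff finite_nbh_diff])
  also have "\<dots> \<le> card (?N R1 \<union> ?N R2) + card (?N R1 \<inter> ?N R2)"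
    by (intro add_mono card_mono fin) (auto simp: nbh_def)
  also have "\<dots> = cost D R1 + cost D R2"
    unfolding cost_def by (rule card_Un_Int[OF finite_nbh_diff finite_nbh_diff, symmetric])
  finally show ?thesis .
qed

lemma cost_reachable_part_le: "cost D (reachable_part E R A) \<le> cost D R"
  unfolding cost_def
  by (intro card_mono[OF finite_nbh_diff] Diff_mono[OF nbh_reachable_part_subset order_refl])

lemma region_reachable_part:
  assumes "A \<subseteq> R" "R \<subseteq> V" "R \<inter> (S \<union> D) = {}"
  shows "region D A (reachable_part E R A)"
proof -
  have "reachable_part E R A \<subseteq> reachable_part E (reachable_part E R A) A"
    using reach_in_reachable_part[of E R _ _ A]
    unfolding reachable_part_def[of E "reachable_part E R A"] by (auto simp: reachable_part_def)
  then show ?thesis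
    using assms reachable_part_subset[of E R A] subset_reachable_part[OF assms(1), of E]
    unfolding region_def by blast
qed

lemma region_Un: "region D A1 R1 \<Longrightarrow> region D A2 R2 \<Longrightarrow> region D (A1 \<union> A2) (R1 \<union> R2)"
  using reachable_part_mono[of R1 "R1 \<union> R2" A1 "A1 \<union> A2" E]
    reachable_part_mono[of R2 "R1 \<union> R2" A2 "A1 \<union> A2" E]
  unfolding region_def by blast

lemma region_insert_source: "region D A R \<Longrightarrow> u \<in> R \<Longrightarrow> region D (insert u A) R"
  unfolding region_def reachable_part_def by blast

lemma region_remove_source:
  assumes "region D (insert u A) R" "u \<in> reachable_part E R A"
  shows "region D A R"
proof -
  have "x \<in> reachable_part E R A" if "x \<in> R" for x
  proof -
    obtain a where a: "a \<in> insert u A" "reach E R a x"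
      using assms(1) \<open>x \<in> R\<close> unfolding region_def reachable_part_def by blast
    show ?thesis
    proof (cases "a = u")
      case True
      then obtain a' where "a' \<in> A" "reach E R a' a" using assms(2) by (auto simp: reachable_part_def)
      then show ?thesis using reach_trans[OF _ a(2)] by (auto simp: reachable_part_def)
    next
      case False
      then show ?thesis using a by (auto simp: reachable_part_def)
    qed
  qed
  then show ?thesis using assms(1) by (auto simp: region_def)
qed

lemma region_insert_sink_iff: "region (insert u D) A R \<longleftrightarrow> region D A R \<and> u \<notin> R"
  unfolding region_def by blast

lemma cost_insert_le: "cost D R \<le> cost (insert u D) R + 1"
proof -
  have "cost D R \<le> card (insert u (nbh V E R - insert u D))"
    unfolding cost_def by (intro card_mono) (auto simp: finite_nbh_diff)
  then show ?thesis by (simp add: cost_def card_insert_if finite_nbh_diff split: if_splits)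
qed

lemma cost_insert: "u \<in> nbh V E R - D \<Longrightarrow> cost (insert u D) R + 1 = cost D R"
proof -
  assume "u \<in> nbh V E R - D"
  moreover have "nbh V E R - insert u D = (nbh V E R - D) - {u}" by blast
  ultimately show ?thesis using card.remove[OF finite_nbh_diff] by (simp add: cost_def)
qed

lemma important_insert_source:
  assumes imp: "important_region D A p R" and "u \<in> R"
  shows "important_region D (insert u A) p R"
proof -
  have R: "region D A R" using imp by (simp add: important_region_def)
  have "region D A R'" if "region D (insert u A) R'" "R \<subset> R'" for R'
  proof (rule region_remove_source[OF that(1)])
    show "u \<in> reachable_part E R' A"
      using R \<open>u \<in> R\<close> reachable_part_mono[of R R' A A E] that(2) unfolding region_def by blast
  qed
  then show ?thesis
    using imp region_insert_source[OF R \<open>u \<in> R\<close>] by (auto simp: important_region_def)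
qed

lemma important_insert_sink:
  assumes imp: "important_region D A p R" and u: "u \<in> nbh V E R - D"
  shows "important_region (insert u D) A (p - 1) R"
proof -
  have less: "cost (insert u D) R + 1 = cost D R" using u by (rule cost_insert)
  have "cost (insert u D) R < cost (insert u D) R'"
    if "region (insert u D) A R'" "R \<subset> R'" for R'
    using imp that less cost_insert_le[of D R' u]
    by (fastforce simp: important_region_def region_insert_sink_iff)
  moreover have "region (insert u D) A R"
    using imp u by (simp add: important_region_def region_insert_sink_iff nbh_def)
  ultimately show ?thesis
    using imp less by (auto simp: important_region_def)
qed

lemma cost_Un_least_cost_region_le:
  assumes Rs: "least_cost_region D A Rs" and R: "region D A' R" "A \<subseteq> A'"
  shows "cost D (R \<union> Rs) \<le> cost D R"
proof -
  have "region D A (reachable_part E (R \<inter> Rs) A)"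
    using R Rs by (intro region_reachable_part) (auto simp: least_cost_region_def region_def)
  then have "cost D Rs \<le> cost D (R \<inter> Rs)"
    using Rs cost_reachable_part_le order_trans by (fastforce simp: least_cost_region_def)
  then show ?thesis using cost_submodular[of D R Rs] by linarith
qed

lemma max_least_cost_region_exists:
  assumes "region D A R0"
  obtains Rs where "max_least_cost_region D A Rs"
proof -
  obtain Rm where "region D A Rm" and Rm_min: "\<forall>R. region D A R \<longrightarrow> cost D Rm \<le> cost D R"
    using ex_has_least_nat[of "region D A" R0 "cost D"] assms by auto
  then have "least_cost_region D A Rm" by (simp add: least_cost_region_def)
  then have nonempty: "{R. least_cost_region D A R} \<noteq> {}" by blast
  have "finite {R. least_cost_region D A R}"
    by (rule finite_subset[of _ "Pow V"]) (auto simp: least_cost_region_def region_def finite_V)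
  from finite_has_maximal[OF this nonempty] obtain Rs where Rs: "least_cost_region D A Rs"
    and maximal: "\<And>R. least_cost_region D A R \<Longrightarrow> Rs \<subseteq> R \<Longrightarrow> Rs = R"
    by auto
  have "R \<subseteq> Rs" if R: "least_cost_region D A R" for R
  proof -
    have "region D A (R \<union> Rs)"
      using R Rs region_Un[of D A R A Rs] by (simp add: least_cost_region_def)
    moreover have "cost D (R \<union> Rs) \<le> cost D R"
      using R Rs by (intro cost_Un_least_cost_region_le) (auto simp: least_cost_region_def)
    ultimately have "least_cost_region D A (R \<union> Rs)"
      using R unfolding least_cost_region_def by (meson order_trans)
    then show ?thesis using maximal by blast
  qed
  then show ?thesis using that Rs by (auto simp: max_least_cost_region_def)
qed

lemma important_region_contains_max_least:
  assumes Rs: "max_least_cost_region D A Rs" and imp: "important_region D A p R"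
  shows "Rs \<subseteq> R"
proof -
  have R: "region D A R" using imp by (simp add: important_region_def)
  have "region D A (R \<union> Rs)"
    using R Rs region_Un[of D A R A Rs] by (simp add: max_least_cost_region_def least_cost_region_def)
  moreover have "cost D (R \<union> Rs) \<le> cost D R"
    using Rs R by (intro cost_Un_least_cost_region_le) (auto simp: max_least_cost_region_def)
  ultimately show ?thesis using imp by (fastforce simp: important_region_def)
qed

lemma region_subset_if_nbh_committed:
  assumes "A \<subseteq> Rs" "nbh V E Rs \<subseteq> D" and R: "region D A R"
  shows "R \<subseteq> Rs"
proof
  fix x assume "x \<in> R"
  with R obtain a where "a \<in> A" "reach E R a x" by (auto simp: region_def reachable_part_def)
  from \<open>reach E R a x\<close> show "x \<in> Rs"
  proof (rule reach_closed)
    show "a \<in> Rs" using \<open>a \<in> A\<close> assms(1) by blast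
  next
    fix b c assume "b \<in> Rs" "c \<in> R" "E b c"
    then show "c \<in> Rs" using assms(2) R by (auto simp: region_def nbh_def)
  qed
qed

lemma least_cost_lt_insert_source:
  assumes Rs: "max_least_cost_region D A Rs" and u: "u \<in> nbh V E Rs"
    and R: "region D (insert u A) R"
  shows "cost D Rs < cost D R"
proof (rule ccontr)
  assume "\<not> cost D Rs < cost D R"
  have Rs_region: "region D A Rs" using Rs by (simp add: max_least_cost_region_def least_cost_region_def)
  obtain w where "w \<in> Rs" "E w u" "u \<notin> Rs" using u by (auto simp: nbh_def)
  then obtain a where "a \<in> A" "reach E Rs a w" using Rs_region by (auto simp: region_def reachable_part_def)
  then have "reach E (R \<union> Rs) a w" by (auto intro: reach_mono)
  then have "reach E (R \<union> Rs) a u"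
    using \<open>E w u\<close> by (rule reach_step) (use R in \<open>auto simp: region_def\<close>)
  then have "u \<in> reachable_part E (R \<union> Rs) A" using \<open>a \<in> A\<close> by (auto simp: reachable_part_def)
  moreover have "region D (insert u A) (R \<union> Rs)" using region_Un[OF R Rs_region] by simp
  ultimately have "region D A (R \<union> Rs)" using region_remove_source by blast
  moreover have "cost D (R \<union> Rs) \<le> cost D R"
    using Rs R by (intro cost_Un_least_cost_region_le) (auto simp: max_least_cost_region_def)
  ultimately have "least_cost_region D A (R \<union> Rs)"
    using Rs \<open>\<not> cost D Rs < cost D R\<close>
    by (fastforce simp: max_least_cost_region_def least_cost_region_def)
  then have "R \<subseteq> Rs" using Rs by (auto simp: max_least_cost_region_def)
  then show False using R \<open>u \<notin> Rs\<close> by (auto simp: region_def)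
qed

lemma card_important_regions_branch:
  assumes Rs: "max_least_cost_region D A Rs" and u: "u \<in> nbh V E Rs - D"
  shows "card {R. important_region D A p R}
    \<le> card {R. important_region D (insert u A) p R} + card {R. important_region (insert u D) A (p - 1) R}"
proof -
  have "important_region D (insert u A) p R \<or> important_region (insert u D) A (p - 1) R"
    if imp: "important_region D A p R" for R
  proof (cases "u \<in> R")
    case True
    then show ?thesis using important_insert_source[OF imp] by blast
  next
    case False
    have "u \<in> nbh V E R - D"
      using u False important_region_contains_max_least[OF Rs imp] imp
      by (auto simp: nbh_def important_region_def region_def)
    then show ?thesis using important_insert_sink[OF imp] by blast
  qed
  then have "card {R. important_region D A p R}
      \<le> card ({R. important_region D (insert u A) p R} \<union> {R. important_region (insert u D) A (p - 1) R})"
    by (intro card_mono finite_UnI finite_important_regions) blast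
  also have "\<dots> \<le> card {R. important_region D (insert u A) p R}
      + card {R. important_region (insert u D) A (p - 1) R}"
    by (rule card_Un_le)
  finally show ?thesis .
qed

lemma card_important_regions_le_one:
  assumes Rs: "max_least_cost_region D A Rs" and "nbh V E Rs \<subseteq> D"
  shows "card {R. important_region D A p R} \<le> 1"
proof -
  have "A \<subseteq> Rs" using Rs by (simp add: max_least_cost_region_def least_cost_region_def region_def)
  have "R = Rs" if imp: "important_region D A p R" for R
  proof
    show "R \<subseteq> Rs"
      using region_subset_if_nbh_committed[OF \<open>A \<subseteq> Rs\<close> assms(2)] imp
      by (simp add: important_region_def)
    show "Rs \<subseteq> R" using important_region_contains_max_least[OF Rs imp] .
  qed
  then have "{R. important_region D A p R} \<subseteq> {Rs}" by blast
  then show ?thesis using card_mono[of "{Rs}"] by fastforce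
qed

lemma cost_insert_sink_ge:
  assumes "least_cost_region D A Rs" "region (insert u D) A R"
  shows "cost D Rs - 1 \<le> cost (insert u D) R"
proof -
  have "cost D Rs \<le> cost D R"
    using assms by (simp add: least_cost_region_def region_insert_sink_iff)
  then show ?thesis using cost_insert_le[of D R u] by linarith
qed

lemma branching_bound:
  fixes c c1 c2 l m p :: nat
  assumes "c \<le> c1 + c2" "c1 * 2 ^ (l + 1) \<le> 4 ^ p" "c2 * 2 ^ (l - 1) \<le> 4 ^ (p - 1)"
    and "m \<le> l" "1 \<le> l" "1 \<le> p"
  shows "c * 2 ^ m \<le> 4 ^ p"
proof -
  obtain l' q where l: "l = Suc l'" and p: "p = Suc q" using assms(5,6) not0_implies_Suc by force
  have "c * 2 ^ m \<le> (c1 + c2) * 2 ^ l"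
    using assms(1,4) by (intro mult_le_mono power_increasing) auto
  also have "\<dots> = c1 * 2 ^ l + 2 * (c2 * 2 ^ l')" by (simp add: l algebra_simps)
  also have "\<dots> \<le> 4 ^ p" using assms(2,3) by (simp add: l p)
  finally show ?thesis .
qed

lemma card_important_regions_bound:
  assumes "\<forall>R. region D A R \<longrightarrow> m \<le> cost D R"
  shows "card {R. important_region D A p R} * 2 ^ m \<le> 4 ^ p"
  using assms
proof (induction "2 * p - m" arbitrary: D A p m rule: less_induct)
  case less
  show ?case
  proof (cases "{R. important_region D A p R} = {}")
    case True
    then show ?thesis by (simp only: card.empty)
  next
    case False
    then obtain R0 where R0: "important_region D A p R0" by blast
    then have "region D A R0" by (simp add: important_region_def)
    then obtain Rs where Rs: "max_least_cost_region D A Rs" by (rule max_least_cost_region_exists)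
    then have least: "least_cost_region D A Rs" by (simp add: max_least_cost_region_def)
    then have "m \<le> cost D Rs" and "cost D Rs \<le> p"
      using less.prems R0 unfolding least_cost_region_def important_region_def by (blast, meson order_trans)
    show ?thesis
    proof (cases "nbh V E Rs \<subseteq> D")
      case True
      then have "m = 0"
        using \<open>m \<le> cost D Rs\<close> by (metis Diff_eq_empty_iff card.empty cost_def le_zero_eq)
      have "card {R. important_region D A p R} \<le> 4 ^ p"
        using card_important_regions_le_one[OF Rs True] one_le_power[of "4::nat" p] by (rule le_trans) simp
      with \<open>m = 0\<close> show ?thesis by simp
    next
      case False
      then obtain u where u: "u \<in> nbh V E Rs - D" by blast
      then have "1 \<le> cost D Rs"
        using finite_nbh_diff[of Rs D] by (auto simp: cost_def Suc_le_eq card_gt_0_iff)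
      have source: "card {R. important_region D (insert u A) p R} * 2 ^ (cost D Rs + 1) \<le> 4 ^ p"
        using \<open>cost D Rs \<le> p\<close> \<open>1 \<le> cost D Rs\<close> \<open>m \<le> cost D Rs\<close>
          least_cost_lt_insert_source[OF Rs] u
        by (intro less.hyps) (auto simp: Suc_le_eq)
      have sink: "card {R. important_region (insert u D) A (p - 1) R} * 2 ^ (cost D Rs - 1)
          \<le> 4 ^ (p - 1)"
        using \<open>cost D Rs \<le> p\<close> \<open>1 \<le> cost D Rs\<close> \<open>m \<le> cost D Rs\<close> cost_insert_sink_ge[OF least]
        by (intro less.hyps) auto
      show ?thesis
        using card_important_regions_branch[OF Rs u] source sink
          \<open>m \<le> cost D Rs\<close> \<open>1 \<le> cost D Rs\<close>
        by (rule branching_bound) (use \<open>1 \<le> cost D Rs\<close> \<open>cost D Rs \<le> p\<close> in linarith)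
    qed
  qed
qed

lemma separator_nbh:
  assumes "C \<subseteq> R" "R \<inter> S = {}"
  shows "separator V E C S (nbh V E R)"
  unfolding separator_def
proof (intro conjI notI)
  show "nbh V E R \<subseteq> V" by (rule nbh_subset)
  assume "\<exists>x\<in>C. \<exists>y\<in>S. reach E (V - nbh V E R) x y"
  then obtain x y where "x \<in> C" "y \<in> S" and xy: "reach E (V - nbh V E R) x y" by blast
  have "y \<in> R" using xy by (rule reach_outside_nbh) (use assms(1) \<open>x \<in> C\<close> in blast)
  then show False using \<open>y \<in> S\<close> assms(2) by blast
qed

lemma chip_region:
  assumes chip: "chip V E S k C" and "v \<in> C"
  shows "region {} {v} C"
proof -
  have C: "C \<subseteq> V" "\<forall>u\<in>C. \<forall>w\<in>C. reach E C u w"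
    using chip by (auto simp: chip_def connected_set_def)
  have sep: "\<not> (\<exists>x\<in>C. \<exists>y\<in>S. reach E (V - nbh V E C) x y)"
    using chip by (simp add: chip_def important_separator_def min_separator_def separator_def)
  have "C \<inter> S = {}"
  proof (rule ccontr)
    assume "C \<inter> S \<noteq> {}"
    then obtain x where "x \<in> C" "x \<in> S" by blast
    then have "reach E (V - nbh V E C) x x" using C(1) by (intro reach_refl) (auto simp: nbh_def)
    then show False using sep \<open>x \<in> C\<close> \<open>x \<in> S\<close> by blast
  qed
  then show ?thesis
    using C \<open>v \<in> C\<close> unfolding region_def reachable_part_def by blast
qed

lemma chip_important_region:
  assumes chip: "chip V E S k C" and "v \<in> C"
  shows "important_region {} {v} (3 * k) C"
proof -
  have "cost {} C < cost {} R" if R: "region {} {v} R" "C \<subset> R" for R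
  proof (rule ccontr)
    assume "\<not> cost {} C < cost {} R"
    then have "card (nbh V E R) \<le> card (nbh V E C)" by (simp add: cost_def)
    moreover have "separator V E C S (nbh V E R)"
      using R by (intro separator_nbh) (auto simp: region_def)
    moreover have "reachable_set V E (nbh V E C) C \<subseteq> C"
      using reach_outside_nbh[of E V C] by (auto simp: reachable_set_def)
    moreover have "R \<subseteq> reachable_set V E (nbh V E R) C"
    proof
      fix y assume "y \<in> R"
      then have "reach E R v y" using R(1) by (auto simp: region_def reachable_part_def)
      moreover have "R \<subseteq> V - nbh V E R" using R(1) by (auto simp: region_def nbh_def)
      ultimately have "reach E (V - nbh V E R) v y" by (rule reach_mono)
      moreover have "v \<in> C - nbh V E R" using \<open>v \<in> C\<close> R(2) by (auto simp: nbh_def)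
      ultimately show "y \<in> reachable_set V E (nbh V E R) C" by (auto simp: reachable_set_def)
    qed
    ultimately show False
      using chip R(2) unfolding chip_def important_separator_def by blast
  qed
  then show ?thesis
    using chip_region[OF assms] chip by (simp add: important_region_def chip_def cost_def)
qed

lemma card_important_regions_le: "card {R. important_region D A p R} \<le> 4 ^ p"
  using card_important_regions_bound[of D A 0 p] by simp

lemma touching_max_chips_subset:
  assumes "max_chip V E S k C"
  shows "{C'. max_chip V E S k C' \<and> touch E C C'}
    \<subseteq> (\<Union>v\<in>nbh V E C. {R. important_region {} {v} (3 * k) R})"
proof
  fix C' assume "C' \<in> {C'. max_chip V E S k C' \<and> touch E C C'}"
  then have C': "max_chip V E S k C'" "touch E C C'" by simp_all
  then obtain v where "v \<in> C'" "v \<in> nbh V E C"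
    using touching_max_chip_meets_nbh[OF assms] by blast
  moreover have "important_region {} {v} (3 * k) C'"
    using C'(1) \<open>v \<in> C'\<close> by (intro chip_important_region) (simp add: max_chip_def)
  ultimately show "C' \<in> (\<Union>v\<in>nbh V E C. {R. important_region {} {v} (3 * k) R})" by blast
qed

end

theorem lemma3p7:
  fixes V :: "'a set" and E :: "'a \<Rightarrow> 'a \<Rightarrow> bool" and S :: "'a set" and k :: nat
  assumes "graph V E" and "S \<subseteq> V"
    and "max_chip V E S k C"
  shows "card {C'. max_chip V E S k C' \<and> touch E C C'} \<le> 3 * k * 4 ^ (3 * k)"
proof -
  interpret separation_graph V E S
    using assms(1) by unfold_locales (simp add: graph_def)
  let ?N = "nbh V E C" and ?I = "\<lambda>v. {R. important_region {} {v} (3 * k) R}"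
  have "card {C'. max_chip V E S k C' \<and> touch E C C'} \<le> card (\<Union>v\<in>?N. ?I v)"
    by (intro card_mono finite_UN_I finite_nbh finite_important_regions touching_max_chips_subset assms(3))
  also have "\<dots> \<le> (\<Sum>v\<in>?N. card (?I v))" by (intro card_UN_le finite_nbh)
  also have "\<dots> \<le> card ?N * 4 ^ (3 * k)"
    using sum_bounded_above[of ?N "\<lambda>v. card (?I v)", OF card_important_regions_le] by simp
  also have "\<dots> \<le> 3 * k * 4 ^ (3 * k)"
    using assms(3) by (simp add: max_chip_def chip_def)
  finally show ?thesis .
qed

end
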